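(* The Weighted Covering VCCR satisfies Positive Involvement in Defeat: for every linear profile $\mathbf P$ and $x,y\in X(\mathbf P)$, if $(x,y)\notin wc(\mathbf P)$ and $\mathbf P'$ is obtained from $\mathbf P$ by adding one new voter whose ballot ranks $y$ above $x$, then $(x,y)\notin wc(\mathbf P')$.
   Context: Profiles: $\mathbf P:V\to\mathcal L(X)$, $V$ nonempty finite set of voters, $X=X(\mathbf P)$ nonempty finite set of candidates, $\mathcal L(X)$ strict linear orders. $\mathrm{Margin}_{\mathbf P}(x,y)$ = #voters ranking $x$ above $y$ minus #ranking $y$ above $x$. Weighted Covering: $(x,y)\in wc(\mathbf P)$ iff $\mathrm{Margin}_{\mathbf P}(x,y)>0$ and $\mathrm{Margin}_{\mathbf P}(x,z)\ge\mathrm{Margin}_{\mathbf P}(y,z)$ for all $z\in X(\mathbf P)$. *)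

theory Defs
  imports Main
begin

text \<open>A strict linear order on the candidate set X, as a relation contained in X \<times> X;
 (a,b) \<in> R means a is ranked above b.\<close>
definition lin_order_on :: "'c set \<Rightarrow> 'c rel \<Rightarrow> bool" where
  "lin_order_on X R \<longleftrightarrow> R \<subseteq> X \<times> X \<and> strict_linear_order_on X R"

definition profile :: "'v set \<Rightarrow> 'c set \<Rightarrow> ('v \<Rightarrow> 'c rel) \<Rightarrow> bool" where
  "profile V X P \<longleftrightarrow> finite V \<and> V \<noteq> {} \<and> finite X \<and> X \<noteq> {} \<and>
     (\<forall>v\<in>V. lin_order_on X (P v))"

definition margin :: "'v set \<Rightarrow> ('v \<Rightarrow> 'c rel) \<Rightarrow> 'c \<Rightarrow> 'c \<Rightarrow> int" where
  "margin V P x y = int (card {v\<in>V. (x,y) \<in> P v}) - int (card {v\<in>V. (y,x) \<in> P v})"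

definition wc :: "'v set \<Rightarrow> 'c set \<Rightarrow> ('v \<Rightarrow> 'c rel) \<Rightarrow> 'c \<Rightarrow> 'c \<Rightarrow> bool" where
  "wc V X P x y \<longleftrightarrow> margin V P x y > 0 \<and> (\<forall>z\<in>X. margin V P x z \<ge> margin V P y z)"

end

theory Submission
  imports Defs
begin

text \<open>Adding a ballot R shifts every margin by the margin of R alone. If R ranks y above x, it
  contributes -1 to the margin of x over y and, for every candidate z, no more to the margin
  of x over z than to that of y over z. So a positive margin of x over y after the addition
  was already positive before, and a z with margin of x over z below that of y over z remains
  such a witness afterwards.\<close>

definition ballot_margin :: "'c rel \<Rightarrow> 'c \<Rightarrow> 'c \<Rightarrow> int" where
  "ballot_margin R a b = of_bool ((a, b) \<in> R) - of_bool ((b, a) \<in> R)"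

lemma margin_eq_sum_ballot_margin:
  assumes "finite V"
  shows "margin V P a b = (\<Sum>v\<in>V. ballot_margin (P v) a b)"
proof -
  have "int (card {v\<in>V. (c, d) \<in> P v}) = (\<Sum>v\<in>V. of_bool ((c, d) \<in> P v))" for c d
    using assms by (simp add: Collect_conj_eq Int_commute)
  then show ?thesis
    by (simp add: margin_def ballot_margin_def sum_subtractf)
qed

lemma margin_insert_voter:
  assumes "finite V" and "i \<notin> V"
  shows "margin (insert i V) (P(i := R)) a b = margin V P a b + ballot_margin R a b"
proof -
  have "(\<Sum>v\<in>V. ballot_margin ((P(i := R)) v) a b) = (\<Sum>v\<in>V. ballot_margin (P v) a b)"
    using assms(2) by (intro sum.cong) auto
  then show ?thesis
    using assms by (simp add: margin_eq_sum_ballot_margin)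
qed

lemma ballot_margin_eq_neg_one:
  assumes "(y, x) \<in> R" and "trans R" and "irrefl R"
  shows "ballot_margin R x y = -1"
  using assms by (auto simp: ballot_margin_def irrefl_def dest: transD)

lemma ballot_margin_mono_above:
  assumes "lin_order_on X R" and "(y, x) \<in> R" and "z \<in> X"
  shows "ballot_margin R x z \<le> ballot_margin R y z"
proof -
  have R: "R \<subseteq> X \<times> X" "trans R" "irrefl R" "total_on X R"
    using assms(1) by (auto simp: lin_order_on_def strict_linear_order_on_def)
  have asym: "(b, a) \<notin> R" if "(a, b) \<in> R" for a b
    using that R(2,3) by (auto simp: irrefl_def dest: transD)
  consider "z = x" | "z = y" | "(z, y) \<in> R" | "(y, z) \<in> R" "(z, x) \<in> R" | "(x, z) \<in> R"
    using assms(2,3) R(1,4) by (auto simp: total_on_def)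
  then show ?thesis
  proof cases
    case 3
    then have "(z, x) \<in> R" using assms(2) R(2) by (auto dest: transD)
    with 3 show ?thesis by (simp add: ballot_margin_def asym)
  next
    case 5
    then have "(y, z) \<in> R" using assms(2) R(2) by (auto dest: transD)
    with 5 show ?thesis by (simp add: ballot_margin_def asym)
  qed (use assms(2) asym in \<open>auto simp: ballot_margin_def\<close>)
qed

lemma wc_of_wc_insert_voter_above:
  assumes "finite V" and "i \<notin> V" and "lin_order_on X R" and "(y, x) \<in> R"
    and "wc (insert i V) X (P(i := R)) x y"
  shows "wc V X P x y"
proof -
  have "trans R" "irrefl R"
    using assms(3) by (auto simp: lin_order_on_def strict_linear_order_on_def)
  then have "margin (insert i V) (P(i := R)) x y = margin V P x y - 1"
    using assms(4) by (simp add: margin_insert_voter[OF assms(1,2)] ballot_margin_eq_neg_one)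
  moreover have "margin V P x z \<ge> margin V P y z" if "z \<in> X" for z
    using assms(5) that ballot_margin_mono_above[OF assms(3,4) that]
    by (auto simp: wc_def margin_insert_voter[OF assms(1,2)])
  ultimately show ?thesis
    using assms(5) by (auto simp: wc_def)
qed

theorem proposition3p16:
  fixes V :: "'v set" and X :: "'c set" and P :: "'v \<Rightarrow> 'c rel"
    and i :: 'v and R :: "'c rel" and x y :: 'c
  assumes "profile V X P"
    and "x \<in> X" and "y \<in> X"
    and "\<not> wc V X P x y"
    and "i \<notin> V"
    and "lin_order_on X R"
    and "(y, x) \<in> R"
  shows "\<not> wc (insert i V) X (P(i := R)) x y"
proof
  assume "wc (insert i V) X (P(i := R)) x y"
  moreover have "finite V"
    using assms(1) by (simp add: profile_def)
  ultimately show False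
    using assms(4-7) wc_of_wc_insert_voter_above[of V i X R y x P] by blast
qed

end
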